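(* There exist an infinite family $\mathcal{P}$ of pairs $(T_1, T_2)$ of unrooted binary phylogenetic trees, where $T_1$ and $T_2$ have a common leaf set $X$, and a function $g$ with $g(n)/n \to 0$ as $n \to \infty$, such that for every pair $(T_1,T_2) \in \mathcal{P}$ with $n = |X|$, every agreement forest of $\{T_1, T_2\}$ has at least $n - g(n)$ components.
   Context: A (binary) phylogenetic tree on a finite set $X$ is an unrooted tree whose internal vertices have degree 3 and whose leaves are bijectively labelled by $X$. Two phylogenetic trees on $X$ are isomorphic ($\cong$) if there is a graph isomorphism between them fixing every leaf label. For $Y \subseteq X$, $T[Y]$ is the minimal subtree of $T$ connecting the leaves in $Y$, and $T|_Y$ is obtained from $T[Y]$ by suppressing all degree-2 vertices. An agreement forest of $\{T_1,T_2\}$ is a partition $\{Y_1,\ldots,Y_k\}$ of $X$ (whose parts are called components) such that (1) $T_1|_{Y_h} \cong T_2|_{Y_h}$ for all $h$, and (2) for each $i \in\{1,2\}$ and all $h \ne h'$, $T_i[Y_h]$ and $T_i[Y_{h'}]$ are vertex-disjoint. *)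

theory Defs
  imports Complex_Main "HOL-Library.Disjoint_Sets"
begin

type_synonym 'v graph = "'v set \<times> 'v set set"

definition is_path :: "'v set set \<Rightarrow> 'v \<Rightarrow> 'v \<Rightarrow> 'v list \<Rightarrow> bool" where
  "is_path E u v p \<longleftrightarrow> p \<noteq> [] \<and> hd p = u \<and> last p = v \<and> distinct p \<and>
     (\<forall>i. Suc i < length p \<longrightarrow> {p ! i, p ! Suc i} \<in> E)"

definition has_cycle :: "'v set set \<Rightarrow> bool" where
  "has_cycle E \<longleftrightarrow> (\<exists>c. 3 \<le> length c \<and> distinct c \<and>
     (\<forall>i. Suc i < length c \<longrightarrow> {c ! i, c ! Suc i} \<in> E) \<and> {last c, hd c} \<in> E)"

definition is_tree :: "'v graph \<Rightarrow> bool" where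
  "is_tree T \<longleftrightarrow> (case T of (V, E) \<Rightarrow>
     finite V \<and> V \<noteq> {} \<and>
     (\<forall>e\<in>E. \<exists>u v. u \<in> V \<and> v \<in> V \<and> u \<noteq> v \<and> e = {u, v}) \<and>
     (\<forall>u\<in>V. \<forall>v\<in>V. \<exists>p. is_path E u v p) \<and>
     \<not> has_cycle E)"

definition degree :: "'v set set \<Rightarrow> 'v \<Rightarrow> nat" where
  "degree E v = card {e \<in> E. v \<in> e}"

text \<open>Unrooted binary phylogenetic tree on X: the leaves are the elements of X
  themselves (labelling by identity); every non-leaf vertex has degree 3.\<close>
definition phylo_tree :: "'v set \<Rightarrow> 'v graph \<Rightarrow> bool" where
  "phylo_tree X T \<longleftrightarrow> (case T of (V, E) \<Rightarrow>
     is_tree T \<and> X \<subseteq> V \<and>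
     (\<forall>v\<in>V. v \<in> X \<longleftrightarrow> degree E v \<le> 1) \<and>
     (\<forall>v\<in>V - X. degree E v = 3))"

definition span_vertices :: "'v graph \<Rightarrow> 'v set \<Rightarrow> 'v set" where
  "span_vertices T Y = {w. \<exists>u\<in>Y. \<exists>v\<in>Y. \<exists>p. is_path (snd T) u v p \<and> w \<in> set p}"

definition span_tree :: "'v graph \<Rightarrow> 'v set \<Rightarrow> 'v graph" where
  "span_tree T Y = (span_vertices T Y, {e \<in> snd T. e \<subseteq> span_vertices T Y})"

definition suppress :: "'v graph \<Rightarrow> 'v graph" where
  "suppress T = (case T of (V, E) \<Rightarrow>
     (let R = {v \<in> V. degree E v \<noteq> 2} in
      (R, {{u, w} | u w. u \<in> R \<and> w \<in> R \<and> u \<noteq> w \<and>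
           (\<exists>p. is_path E u w p \<and> (\<forall>z\<in>set p. z \<noteq> u \<and> z \<noteq> w \<longrightarrow> z \<notin> R))})))"

definition restrict_tree :: "'v graph \<Rightarrow> 'v set \<Rightarrow> 'v graph" where
  "restrict_tree T Y = suppress (span_tree T Y)"

definition iso_fixing :: "'v set \<Rightarrow> 'v graph \<Rightarrow> 'v graph \<Rightarrow> bool" where
  "iso_fixing Y T T' \<longleftrightarrow> (\<exists>f. bij_betw f (fst T) (fst T') \<and> (\<forall>y\<in>Y. f y = y) \<and>
     (\<forall>u\<in>fst T. \<forall>w\<in>fst T. {u, w} \<in> snd T \<longleftrightarrow> {f u, f w} \<in> snd T'))"

definition agreement_forest :: "'v set \<Rightarrow> 'v graph \<Rightarrow> 'v graph \<Rightarrow> 'v set set \<Rightarrow> bool" where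
  "agreement_forest X T1 T2 F \<longleftrightarrow> partition_on X F \<and>
     (\<forall>Y\<in>F. iso_fixing Y (restrict_tree T1 Y) (restrict_tree T2 Y)) \<and>
     (\<forall>Y\<in>F. \<forall>Y'\<in>F. Y \<noteq> Y' \<longrightarrow>
        span_vertices T1 Y \<inter> span_vertices T1 Y' = {} \<and>
        span_vertices T2 Y \<inter> span_vertices T2 Y' = {})"

end

theory Submission
  imports Defs "HOL-Library.Infinite_Set" "HOL-Real_Asymp.Real_Asymp"
begin

text \<open>Take \<open>n = m\<^sup>2\<close> leaves and two caterpillars: \<open>T\<^sub>1\<close> lists the leaves in the order
  \<open>0, \<dots>, n - 1\<close>, \<open>T\<^sub>2\<close> in the order obtained by transposing the \<open>m \<times> m\<close> grid, so that
  for any two distinct leaves the differences of their positions in the two orders add up to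
  at least \<open>m - 1\<close>.
  Let \<open>Y\<close> be a component of an agreement forest. Away from the two ends of the spine of
  \<open>T\<^sub>i[Y]\<close>, every leaf of \<open>Y\<close> keeps its own spine vertex after suppression, and the
  isomorphism \<open>T\<^sub>1|\<^sub>Y \<cong> T\<^sub>2|\<^sub>Y\<close> maps spine edges to spine edges. Hence leaves that are
  consecutive on the spine of \<open>T\<^sub>1[Y]\<close> are consecutive on that of \<open>T\<^sub>2[Y]\<close>, and summing
  over consecutive pairs shows that the two spines together have length at least
  \<open>(|Y| - 1)(m - 5)/16\<close>. The spines of distinct components are disjoint, so their lengths
  add up to at most \<open>n\<close> in each tree; therefore \<open>(n - |F|)(m - 5) \<le> 32 n\<close>, i.e.
  \<open>|F| \<ge> n - 64 \<surd>n\<close>.\<close>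

lemma is_path_rev: "is_path E u v p \<Longrightarrow> is_path E v u (rev p)"
  unfolding is_path_def
proof (intro conjI allI impI)
  assume h: "p \<noteq> [] \<and> hd p = u \<and> last p = v \<and> distinct p \<and>
    (\<forall>i. Suc i < length p \<longrightarrow> {p ! i, p ! Suc i} \<in> E)"
  fix i assume i: "Suc i < length (rev p)"
  have "{p ! (length p - Suc (Suc i)), p ! Suc (length p - Suc (Suc i))} \<in> E"
    using h i by auto
  moreover have "Suc (length p - Suc (Suc i)) = length p - Suc i" using i by auto
  ultimately show "{rev p ! i, rev p ! Suc i} \<in> E" using i
    by (auto simp: rev_nth insert_commute)
qed (auto simp: hd_rev last_rev)

lemma is_path_mono: "is_path E u v p \<Longrightarrow> E \<subseteq> E' \<Longrightarrow> is_path E' u v p"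
  unfolding is_path_def by blast

lemma is_path_edge: "is_path E u v p \<Longrightarrow> Suc i < length p \<Longrightarrow> {p ! i, p ! Suc i} \<in> E"
  unfolding is_path_def by blast

lemma is_path_take:
  assumes "is_path E u v p" "i < length p"
  shows "is_path E u (p ! i) (take (Suc i) p)"
  unfolding is_path_def
proof (intro conjI allI impI)
  show "take (Suc i) p \<noteq> []" "hd (take (Suc i) p) = u" "distinct (take (Suc i) p)"
    using assms by (auto simp: is_path_def hd_take)
  show "last (take (Suc i) p) = p ! i" using assms(2) by (subst last_conv_nth) auto
  fix k assume "Suc k < length (take (Suc i) p)"
  then show "{take (Suc i) p ! k, take (Suc i) p ! Suc k} \<in> E"
    using assms(1) by (simp add: is_path_def)
qed

lemma is_path_snoc:
  assumes "is_path E u v p" "w \<notin> set p" "{v, w} \<in> E"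
  shows "is_path E u w (p @ [w])"
  unfolding is_path_def
proof (intro conjI allI impI)
  show "hd (p @ [w]) = u" "distinct (p @ [w])" using assms by (auto simp: is_path_def)
  fix k assume k: "Suc k < length (p @ [w])"
  show "{(p @ [w]) ! k, (p @ [w]) ! Suc k} \<in> E"
  proof (cases "Suc k < length p")
    case True
    then show ?thesis using assms(1) by (simp add: is_path_def nth_append)
  next
    case False
    then have "k = length p - 1" "p \<noteq> []" using k assms(1) by (auto simp: is_path_def)
    then have "p ! k = v" using assms(1) by (simp add: is_path_def last_conv_nth)
    with False k assms(3) \<open>k = length p - 1\<close> \<open>p \<noteq> []\<close> show ?thesis by (simp add: nth_append)
  qed
qed simp_all

lemma rtranclp_imp_is_path:
  assumes "(\<lambda>a b. {a, b} \<in> E)\<^sup>*\<^sup>* u v"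
  shows "\<exists>p. is_path E u v p"
  using assms
proof (induction rule: rtranclp_induct)
  case base
  show ?case by (rule exI[of _ "[u]"]) (simp add: is_path_def)
next
  case (step v w)
  then obtain p where p: "is_path E u v p" by blast
  show ?case
  proof (cases "w \<in> set p")
    case True
    then obtain i where "i < length p" "p ! i = w" by (auto simp: in_set_conv_nth)
    then show ?thesis using is_path_take[OF p] by metis
  next
    case False
    then show ?thesis using is_path_snoc[OF p] step(2) by blast
  qed
qed

lemma list_discrete_ivt:
  fixes f :: "'a \<Rightarrow> nat"
  assumes "p \<noteq> []"
    and "\<forall>i. Suc i < length p \<longrightarrow> f (p ! Suc i) \<le> f (p ! i) + 1 \<and> f (p ! i) \<le> f (p ! Suc i) + 1"
    and "min (f (hd p)) (f (last p)) \<le> j" "j \<le> max (f (hd p)) (f (last p))"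
  shows "\<exists>i < length p. f (p ! i) = j"
  using assms
proof (induction p)
  case Nil then show ?case by simp
next
  case (Cons a p)
  show ?case
  proof (cases "p = [] \<or> f a = j")
    case True
    then show ?thesis using Cons.prems by auto
  next
    case False
    then have pne: "p \<noteq> []" and ne: "f a \<noteq> j" by auto
    have step: "f (hd p) \<le> f a + 1 \<and> f a \<le> f (hd p) + 1"
      using Cons.prems(2)[rule_format, of 0] pne by (auto simp: hd_conv_nth)
    have "min (f (hd p)) (f (last p)) \<le> j \<and> j \<le> max (f (hd p)) (f (last p))"
      using Cons.prems(3,4) pne ne step by auto
    then obtain i where "i < length p" "f (p ! i) = j"
      using Cons.IH[OF pne] Cons.prems(2) pne by fastforce
    then show ?thesis by (intro exI[of _ "Suc i"]) auto
  qed
qed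

lemma cycle_vertex_two_neighbours:
  assumes c: "3 \<le> length c" "distinct c" "\<forall>i. Suc i < length c \<longrightarrow> {c ! i, c ! Suc i} \<in> E"
    "{last c, hd c} \<in> E"
    and t: "t < length c"
  shows "\<exists>a b. a \<noteq> b \<and> a \<in> set c \<and> b \<in> set c \<and> {c ! t, a} \<in> E \<and> {c ! t, b} \<in> E"
proof -
  define L where "L = length c"
  have "c \<noteq> []" using c(1) by auto
  then have lastc: "last c = c ! (L - 1)" and hdc: "hd c = c ! 0"
    by (simp_all add: L_def last_conv_nth hd_conv_nth)
  define pr where "pr = (if t = 0 then L - 1 else t - 1)"
  define su where "su = (if t = L - 1 then 0 else t + 1)"
  have lt: "pr < L" "su < L" using t c(1) by (auto simp: pr_def su_def L_def)
  have "pr \<noteq> su" using t c(1) by (auto simp: pr_def su_def L_def)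
  then have d: "c ! pr \<noteq> c ! su" using lt c(2) by (simp add: nth_eq_iff_index_eq L_def)
  have a1: "{c ! t, c ! pr} \<in> E"
  proof (cases "t = 0")
    case True then show ?thesis using c(4) lastc hdc by (simp add: pr_def insert_commute)
  next
    case False
    then have "{c ! (t - 1), c ! Suc (t - 1)} \<in> E" using c(3) t by (metis Suc_pred' bot_nat_0.not_eq_extremum)
    then show ?thesis using False by (simp add: pr_def insert_commute)
  qed
  have a2: "{c ! t, c ! su} \<in> E"
  proof (cases "t = L - 1")
    case True then show ?thesis using c(4) lastc hdc by (simp add: su_def)
  next
    case False
    then show ?thesis using c(3) t by (simp add: su_def L_def)
  qed
  show ?thesis using d a1 a2 lt nth_mem unfolding L_def by blast
qed

lemma degree_eq_card_neighbours:
  assumes "\<forall>e\<in>E. \<exists>a b. e = {a, b}"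
  shows "degree E v = card {w. {v, w} \<in> E}"
proof -
  have "{e \<in> E. v \<in> e} = (\<lambda>w. {v, w}) ` {w. {v, w} \<in> E}"
    using assms by (fastforce simp: insert_commute)
  moreover have "inj_on (\<lambda>w. {v, w}) {w. {v, w} \<in> E}"
    by (auto simp: inj_on_def doubleton_eq_iff)
  ultimately show ?thesis unfolding degree_def by (simp add: card_image)
qed

lemma sum_disjoint_interval_lengths_le:
  fixes f g :: "'a \<Rightarrow> nat"
  assumes fin: "finite H" and le: "\<And>y. y \<in> H \<Longrightarrow> a \<le> f y \<and> f y \<le> g y \<and> g y \<le> b"
    and dj: "\<And>y1 y2. y1 \<in> H \<Longrightarrow> y2 \<in> H \<Longrightarrow> y1 \<noteq> y2 \<Longrightarrow> {f y1..<g y1} \<inter> {f y2..<g y2} = {}"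
  shows "(\<Sum>y\<in>H. g y - f y) \<le> b - a"
proof -
  have "(\<Sum>y\<in>H. g y - f y) = (\<Sum>y\<in>H. card {f y..<g y})" by simp
  also have "\<dots> = card (\<Union>y\<in>H. {f y..<g y})"
    by (rule card_UN_disjoint[symmetric]) (use fin dj in auto)
  also have "\<dots> \<le> card {a..<b}"
    by (rule card_mono) (use le in force)+
  finally show ?thesis by simp
qed

lemma overlapping_gap_intervals_eq:
  fixes a1 b1 a2 b2 :: nat
  assumes "a1 \<in> K" "b1 \<in> K" "a2 \<in> K" "b2 \<in> K"
    and "\<forall>k\<in>K. \<not> (a1 < k \<and> k < b1)" "\<forall>k\<in>K. \<not> (a2 < k \<and> k < b2)"
    and "{a1..<b1} \<inter> {a2..<b2} \<noteq> {}"
  shows "a1 = a2 \<and> b1 = b2"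
proof -
  from assms(7) obtain t where "t \<in> {a1..<b1}" "t \<in> {a2..<b2}" by blast
  then have "a1 \<le> t" "t < b1" "a2 \<le> t" "t < b2" by auto
  then have "\<not> a1 < a2" "\<not> a2 < a1" "\<not> b1 < b2" "\<not> b2 < b1"
    using assms(1-6) by force+
  then show ?thesis by linarith
qed

definition absdiff :: "nat \<Rightarrow> nat \<Rightarrow> nat" where "absdiff a b = max a b - min a b"

lemma absdiff_commute: "absdiff a b = absdiff b a"
  by (simp add: absdiff_def max.commute min.commute)

lemma sum_card_minus_one_partition:
  assumes "partition_on A F" "finite A"
  shows "(\<Sum>Y\<in>F. card Y - 1) + card F = card A"
proof -
  have fin: "finite F" "\<And>Y. Y \<in> F \<Longrightarrow> finite Y"
    using assms finite_elements by (auto simp: partition_on_def intro: finite_subset)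
  have "(\<Sum>Y\<in>F. card Y - 1) + card F = (\<Sum>Y\<in>F. card Y - 1 + 1)"
    by (simp only: sum.distrib) simp
  also have "\<dots> = (\<Sum>Y\<in>F. card Y)"
  proof (rule sum.cong[OF refl])
    fix Y assume "Y \<in> F"
    then have "Y \<noteq> {}" "finite Y" using assms(1) fin(2) by (auto simp: partition_on_def)
    then show "card Y - 1 + 1 = card Y" by (simp add: Suc_leI card_gt_0_iff)
  qed
  also have "\<dots> = card A" using product_partition[OF assms(1) fin(2)] by simp
  finally show ?thesis .
qed

text \<open>The caterpillar with leaves \<open>0, \<dots>, n - 1\<close> in which leaf \<open>x\<close> sits at position \<open>\<pi> x\<close>.
  Its spine vertices are \<open>n + j\<close> for \<open>j < n - 2\<close>; the leaf at position \<open>p\<close> hangs from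
  spine vertex \<open>n + attach p\<close>, so the two end vertices of the spine carry two leaves each.
  The \<open>level\<close> of a vertex is the index of its spine vertex.\<close>

locale caterpillar =
  fixes n :: nat and \<pi> :: "nat \<Rightarrow> nat"
  assumes n_ge_4: "4 \<le> n" and bij: "bij_betw \<pi> {..<n} {..<n}"
begin

definition attach :: "nat \<Rightarrow> nat" where
  "attach p = (if p = 0 then 0 else if p = n - 1 then n - 3 else p - 1)"

definition level :: "nat \<Rightarrow> nat" where
  "level v = (if v < n then attach (\<pi> v) else v - n)"

definition adj :: "nat \<Rightarrow> nat \<Rightarrow> bool" where
  "adj a b \<longleftrightarrow> (a < n \<and> b = n + level a) \<or> (b < n \<and> a = n + level b) \<or>
     (n \<le> a \<and> n \<le> b \<and> (b = Suc a \<or> a = Suc b) \<and> a < n + (n - 2) \<and> b < n + (n - 2))"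

definition verts :: "nat set" where "verts = {..<n + (n - 2)}"
definition edges :: "nat set set" where "edges = {{a, b} | a b. adj a b}"
definition tree :: "nat graph" where "tree = (verts, edges)"

lemma perm_less: "x < n \<Longrightarrow> \<pi> x < n"
  using bij by (auto simp: bij_betw_def)

lemma perm_inj: "x < n \<Longrightarrow> y < n \<Longrightarrow> \<pi> x = \<pi> y \<Longrightarrow> x = y"
  using bij by (auto simp: bij_betw_def inj_on_def)

lemma attach_le: "p < n \<Longrightarrow> attach p \<le> n - 3"
  using n_ge_4 by (auto simp: attach_def)

lemma attach_bounds: "attach p \<le> p \<and> p \<le> attach p + 2"
  unfolding attach_def by auto

lemma level_leaf_le: "x < n \<Longrightarrow> level x \<le> n - 3"
  by (simp add: level_def attach_le perm_less)

lemma level_spine [simp]: "level (n + j) = j"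
  by (simp add: level_def)

lemma spine_eq_level: "n \<le> v \<Longrightarrow> v = n + level v"
  by (simp add: level_def)

lemma adj_sym: "adj a b \<longleftrightarrow> adj b a"
  unfolding adj_def by auto

lemma adj_irrefl: "\<not> adj a a"
  unfolding adj_def by auto

lemma adj_in_verts: "adj a b \<Longrightarrow> a \<in> verts \<and> b \<in> verts"
  using level_leaf_le n_ge_4 unfolding adj_def verts_def by fastforce

lemma doubleton_in_edges_iff: "{a, b} \<in> edges \<longleftrightarrow> adj a b"
  unfolding edges_def using adj_sym by (auto simp: doubleton_eq_iff)

lemma edgesE:
  assumes "e \<in> edges"
  obtains a b where "e = {a, b}" "adj a b"
  using assms unfolding edges_def by auto

lemma adj_leaf_iff: "x < n \<Longrightarrow> adj x w \<longleftrightarrow> w = n + level x"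
  unfolding adj_def by auto

lemma adj_spine_spine:
  "j + 1 < n - 2 \<Longrightarrow> adj (n + j) (n + j + 1)"
  unfolding adj_def by arith

lemma level_adj: "adj a b \<Longrightarrow> level b \<le> level a + 1 \<and> level a \<le> level b + 1"
  unfolding adj_def by (auto simp: level_def)

lemma path_interior_spine:
  assumes "is_path edges u v p" "0 < i" "Suc i < length p"
  shows "n \<le> p ! i"
proof (rule ccontr)
  assume "\<not> n \<le> p ! i"
  then have leaf: "p ! i < n" by simp
  have "{p ! (i - 1), p ! Suc (i - 1)} \<in> edges" using assms by (intro is_path_edge) auto
  then have "adj (p ! i) (p ! (i - 1))"
    using assms(2) by (simp add: doubleton_in_edges_iff adj_sym)
  then have prev: "p ! (i - 1) = n + level (p ! i)" using adj_leaf_iff[OF leaf] by simp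
  have "adj (p ! i) (p ! Suc i)"
    using is_path_edge[OF assms(1,3)] by (simp add: doubleton_in_edges_iff)
  then have succ: "p ! Suc i = n + level (p ! i)" using adj_leaf_iff[OF leaf] by simp
  have "distinct p" using assms(1) by (simp add: is_path_def)
  then have "p ! (i - 1) \<noteq> p ! Suc i" using assms by (simp add: nth_eq_iff_index_eq)
  then show False using prev succ by simp
qed

lemma path_level_ivt:
  assumes "is_path edges u v p" "min (level u) (level v) \<le> j" "j \<le> max (level u) (level v)"
  shows "\<exists>i < length p. level (p ! i) = j"
proof -
  have "p \<noteq> []" "hd p = u" "last p = v" using assms(1) by (auto simp: is_path_def)
  moreover have "\<forall>i. Suc i < length p \<longrightarrow>
      level (p ! Suc i) \<le> level (p ! i) + 1 \<and> level (p ! i) \<le> level (p ! Suc i) + 1"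
    using assms(1) level_adj by (auto simp: doubleton_in_edges_iff dest!: is_path_edge)
  ultimately show ?thesis using list_discrete_ivt[of p level j] assms(2,3) by auto
qed

lemma path_from_leaf:
  assumes "is_path edges u v p" "u < n" "u \<noteq> v"
  shows "1 < length p \<and> p ! 1 = n + level u"
proof -
  have ne: "p \<noteq> []" "hd p = u" "last p = v" using assms(1) by (auto simp: is_path_def)
  have "length p \<noteq> 1" using ne assms(3) by (cases p) auto
  then have "1 < length p" using ne by (cases p) auto
  moreover have "p ! 0 = u" using ne by (simp add: hd_conv_nth)
  ultimately show ?thesis using is_path_edge[OF assms(1), of 0] adj_leaf_iff[OF assms(2)]
    by (simp add: doubleton_in_edges_iff)
qed

lemma degree_induced:
  assumes "v \<in> S"
  shows "degree {e \<in> edges. e \<subseteq> S} v = card {w \<in> S. adj v w}"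
proof -
  have "\<forall>e\<in>{e \<in> edges. e \<subseteq> S}. \<exists>a b. e = {a, b}" by (blast elim: edgesE)
  moreover have "{w. {v, w} \<in> {e \<in> edges. e \<subseteq> S}} = {w \<in> S. adj v w}"
    using assms by (auto simp: doubleton_in_edges_iff)
  ultimately show ?thesis by (simp add: degree_eq_card_neighbours)
qed

lemma degree_edges: "degree edges v = card {w. adj v w}"
  using degree_induced[of v UNIV] by simp

lemma degree_leaf: "x < n \<Longrightarrow> degree edges x = 1"
  using adj_leaf_iff by (simp add: degree_edges)

lemma spine_neighbours:
  assumes "j < n - 2"
  shows "{w. adj (n + j) w} = {x. x < n \<and> level x = j} \<union>
    {w. (0 < j \<and> w = n + j - 1) \<or> (j + 1 < n - 2 \<and> w = n + j + 1)}"
  using assms unfolding adj_def by (auto simp: level_def)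

lemma card_attach_fiber:
  assumes "j \<le> n - 3"
  shows "card {p. p < n \<and> attach p = j} = (if j = 0 \<or> j = n - 3 then 2 else 1)"
proof -
  have "{p. p < n \<and> attach p = j} =
      (if j = 0 then {0, 1} else if j = n - 3 then {n - 2, n - 1} else {j + 1})"
    using assms n_ge_4 unfolding attach_def by auto
  then show ?thesis using assms n_ge_4 by simp
qed

lemma card_level_fiber: "card {x. x < n \<and> level x = j} = card {p. p < n \<and> attach p = j}"
proof -
  have "\<pi> ` {x. x < n \<and> level x = j} = {p. p < n \<and> attach p = j}"
  proof
    show "\<pi> ` {x. x < n \<and> level x = j} \<subseteq> {p. p < n \<and> attach p = j}"
      using perm_less by (auto simp: level_def)
    show "{p. p < n \<and> attach p = j} \<subseteq> \<pi> ` {x. x < n \<and> level x = j}"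
    proof
      fix p assume p: "p \<in> {p. p < n \<and> attach p = j}"
      then have "p \<in> \<pi> ` {..<n}" using bij by (simp add: bij_betw_def)
      then obtain x where "x < n" "\<pi> x = p" by auto
      then show "p \<in> \<pi> ` {x. x < n \<and> level x = j}" using p by (auto simp: level_def)
    qed
  qed
  moreover have "inj_on \<pi> {x. x < n \<and> level x = j}"
    using perm_inj by (auto simp: inj_on_def)
  ultimately show ?thesis by (metis card_image)
qed

lemma card_level_fiber_le: "card {x. x < n \<and> level x = j} \<le> 2"
proof (cases "j \<le> n - 3")
  case True
  then show ?thesis using card_level_fiber card_attach_fiber[OF True] by simp
next
  case False
  then have "{x. x < n \<and> level x = j} = {}" using level_leaf_le by force
  then show ?thesis by (simp only: card.empty)
qed

lemma degree_spine:
  assumes "j < n - 2"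
  shows "degree edges (n + j) = 3"
proof -
  let ?A = "{x. x < n \<and> level x = j}"
  let ?B = "{w. (0 < j \<and> w = n + j - 1) \<or> (j + 1 < n - 2 \<and> w = n + j + 1)}"
  have fin: "finite ?A" "finite ?B"
    by (simp, rule finite_subset[of _ "{n + j - 1, n + j + 1}"]) auto
  have cA: "card ?A = (if j = 0 \<or> j = n - 3 then 2 else 1)"
    using card_level_fiber card_attach_fiber[of j] assms by simp
  have "?B = (if j = 0 then {n + 1} else if j = n - 3 then {n + j - 1} else {n + j - 1, n + j + 1})"
    using assms n_ge_4 by auto
  then have cB: "card ?B = (if j = 0 \<or> j = n - 3 then 1 else 2)"
    using assms n_ge_4 by auto
  have disj: "?A \<inter> ?B = {}" by auto
  show ?thesis
    unfolding degree_edges spine_neighbours[OF assms] card_Un_disjoint[OF fin disj] cA cB by simp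
qed

lemma reaches_spine_start:
  assumes "v \<in> verts"
  shows "(\<lambda>a b. {a, b} \<in> edges)\<^sup>*\<^sup>* v n"
proof -
  have spine: "(\<lambda>a b. {a, b} \<in> edges)\<^sup>*\<^sup>* (n + j) n" if "j < n - 2" for j
    using that
  proof (induction j)
    case (Suc j)
    then have "{n + Suc j, n + j} \<in> edges"
      using adj_spine_spine[of j] by (simp add: doubleton_in_edges_iff adj_sym)
    then show ?case using Suc by (meson Suc_lessD converse_rtranclp_into_rtranclp)
  qed simp
  show ?thesis
  proof (cases "v < n")
    case True
    have "{v, n + level v} \<in> edges" using adj_leaf_iff[OF True] by (simp add: doubleton_in_edges_iff)
    moreover have "level v < n - 2" using level_leaf_le[OF True] n_ge_4 by simp
    ultimately show ?thesis using spine by (meson converse_rtranclp_into_rtranclp)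
  next
    case False
    then have "v = n + level v" "level v < n - 2"
      using assms spine_eq_level by (auto simp: verts_def level_def)
    then show ?thesis using spine by metis
  qed
qed

lemma connected:
  assumes "u \<in> verts" "v \<in> verts"
  shows "\<exists>p. is_path edges u v p"
proof -
  let ?r = "\<lambda>a b. {a, b} \<in> edges"
  have "conversep ?r = ?r" by (auto simp: fun_eq_iff insert_commute)
  then have "?r\<^sup>*\<^sup>* n v" using rtranclp_converseI[OF reaches_spine_start[OF assms(2)]] by simp
  then have "?r\<^sup>*\<^sup>* u v" using reaches_spine_start[OF assms(1)] by simp
  then show ?thesis by (rule rtranclp_imp_is_path)
qed

text \<open>On a cycle every vertex has two neighbours, so there are no leaves on it; the largest
  spine vertex on it would need two distinct smaller spine neighbours.\<close>

lemma no_cycle: "\<not> has_cycle edges"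
proof
  assume "has_cycle edges"
  then obtain c where c: "3 \<le> length c" "distinct c"
    "\<forall>i. Suc i < length c \<longrightarrow> {c ! i, c ! Suc i} \<in> edges" "{last c, hd c} \<in> edges"
    unfolding has_cycle_def by blast
  note two_nbrs = cycle_vertex_two_neighbours[OF c]
  have spine: "n \<le> v" if v: "v \<in> set c" for v
  proof (rule ccontr)
    obtain t where t: "t < length c" "c ! t = v" using v by (auto simp: in_set_conv_nth)
    assume "\<not> n \<le> v"
    then have "v < n" by simp
    moreover obtain a b where "a \<noteq> b" "adj v a" "adj v b"
      using two_nbrs[OF t(1)] t(2) by (auto simp: doubleton_in_edges_iff)
    ultimately show False using adj_leaf_iff by simp
  qed
  define M where "M = Max (set c)"
  have "c \<noteq> []" using c(1) by auto
  then have "M \<in> set c" by (simp add: M_def)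
  then obtain t where t: "t < length c" "c ! t = M" by (auto simp: in_set_conv_nth)
  obtain a b where ab: "a \<noteq> b" "a \<in> set c" "b \<in> set c" "adj M a" "adj M b"
    using two_nbrs[OF t(1)] t(2) by (auto simp: doubleton_in_edges_iff)
  have "n \<le> M" "n \<le> a" "n \<le> b" using spine ab(2,3) \<open>M \<in> set c\<close> by auto
  moreover have "a \<le> M" "b \<le> M" using ab(2,3) by (auto simp: M_def)
  ultimately have "M = Suc a" "M = Suc b" using ab(4,5) unfolding adj_def by auto
  then show False using ab(1) by simp
qed

lemma phylo_tree_caterpillar: "phylo_tree {..<n} tree"
proof -
  have "is_tree tree"
    unfolding is_tree_def tree_def
  proof (simp only: prod.case, intro conjI)
    show "finite verts" by (simp add: verts_def)
    have "0 \<in> verts" using n_ge_4 by (simp add: verts_def)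
    then show "verts \<noteq> {}" by blast
    show "\<forall>e\<in>edges. \<exists>u v. u \<in> verts \<and> v \<in> verts \<and> u \<noteq> v \<and> e = {u, v}"
      using adj_in_verts adj_irrefl by (metis edgesE)
    show "\<forall>u\<in>verts. \<forall>v\<in>verts. \<exists>p. is_path edges u v p" using connected by blast
    show "\<not> has_cycle edges" by (rule no_cycle)
  qed
  moreover have "degree edges v = 3" if "v \<in> verts" "\<not> v < n" for v
    using that degree_spine[of "v - n"] by (auto simp: verts_def)
  ultimately show ?thesis
    using degree_leaf unfolding phylo_tree_def tree_def by (force simp: verts_def)
qed

end

locale caterpillar_component = caterpillar +
  fixes Y :: "nat set"
  assumes Y_sub: "Y \<subseteq> {..<n}" and card_Y: "2 \<le> card Y"
begin

definition spanned :: "nat set" where "spanned = span_vertices tree Y"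
definition spanned_edges :: "nat set set" where "spanned_edges = {e \<in> edges. e \<subseteq> spanned}"
definition kept :: "nat set" where "kept = {v \<in> spanned. degree spanned_edges v \<noteq> 2}"
definition kept_edges :: "nat set set" where
  "kept_edges = {{u, w} | u w. u \<in> kept \<and> w \<in> kept \<and> u \<noteq> w \<and>
     (\<exists>p. is_path spanned_edges u w p \<and> (\<forall>z\<in>set p. z \<noteq> u \<and> z \<noteq> w \<longrightarrow> z \<notin> kept))}"
definition lo :: nat where "lo = Min (level ` Y)"
definition hi :: nat where "hi = Max (level ` Y)"

lemma finite_Y: "finite Y"
  using card_Y by (metis card.infinite not_numeral_le_zero)

lemma Y_ne: "Y \<noteq> {}"
  using card_Y by auto

lemma restrict_tree_eq: "restrict_tree tree Y = (kept, kept_edges)"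
  unfolding restrict_tree_def suppress_def span_tree_def kept_def kept_edges_def
    spanned_edges_def spanned_def
  by (simp add: tree_def Let_def)

lemma level_between: "y \<in> Y \<Longrightarrow> lo \<le> level y \<and> level y \<le> hi"
  using finite_Y unfolding lo_def hi_def by auto

lemma hi_le: "hi \<le> n - 3"
proof -
  have "hi \<in> level ` Y" using finite_Y Y_ne unfolding hi_def by simp
  then show ?thesis using Y_sub level_leaf_le by auto
qed

lemma spanned_edges_sub: "spanned_edges \<subseteq> edges"
  by (auto simp: spanned_edges_def)

lemma Y_sub_spanned: "Y \<subseteq> spanned"
proof
  fix y assume "y \<in> Y"
  moreover have "is_path edges y y [y]" by (simp add: is_path_def)
  ultimately show "y \<in> spanned" unfolding spanned_def span_vertices_def tree_def by force
qed

lemma leaf_spanned: "w \<in> spanned \<Longrightarrow> w < n \<Longrightarrow> w \<in> Y"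
proof -
  assume w: "w \<in> spanned" "w < n"
  then obtain u v p where p: "u \<in> Y" "v \<in> Y" "is_path edges u v p" "w \<in> set p"
    unfolding spanned_def span_vertices_def tree_def by auto
  then obtain i where i: "i < length p" "p ! i = w" by (auto simp: in_set_conv_nth)
  have ne: "p \<noteq> []" "hd p = u" "last p = v" using p(3) by (auto simp: is_path_def)
  show "w \<in> Y"
  proof (cases "i = 0 \<or> i = length p - 1")
    case True
    then show ?thesis using ne i p by (auto simp: hd_conv_nth last_conv_nth)
  next
    case False
    then have "n \<le> p ! i" using i by (intro path_interior_spine[OF p(3)]) auto
    then show ?thesis using i w by simp
  qed
qed

lemma spine_spanned_pair:
  assumes "u \<in> Y" "v \<in> Y" "u \<noteq> v" "min (level u) (level v) \<le> j" "j \<le> max (level u) (level v)"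
  shows "n + j \<in> spanned"
proof -
  have uv: "u \<in> verts" "v \<in> verts" "u < n" "v < n" using assms Y_sub by (auto simp: verts_def)
  obtain p where p: "is_path edges u v p" using connected[OF uv(1,2)] by blast
  have on_p: "x \<in> set p \<Longrightarrow> x \<in> spanned" for x
    using p assms(1,2) unfolding spanned_def span_vertices_def tree_def by auto
  have ne: "p \<noteq> []" "hd p = u" "last p = v" using p by (auto simp: is_path_def)
  consider "j = level u" | "j = level v" | "j \<noteq> level u" "j \<noteq> level v" by blast
  then show ?thesis
  proof cases
    case 1
    have "1 < length p \<and> p ! 1 = n + level u" by (rule path_from_leaf[OF p uv(3) assms(3)])
    then show ?thesis using on_p 1 by (metis nth_mem)
  next
    case 2
    have "1 < length (rev p) \<and> rev p ! 1 = n + level v"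
      by (rule path_from_leaf[OF is_path_rev[OF p] uv(4)]) (use assms(3) in auto)
    then show ?thesis using on_p 2 by (metis nth_mem set_rev)
  next
    case 3
    obtain i where i: "i < length p" "level (p ! i) = j" using path_level_ivt[OF p assms(4,5)] by blast
    have "i \<noteq> 0" using i 3 ne by (metis hd_conv_nth)
    moreover have "i \<noteq> length p - 1" using i 3 ne by (metis last_conv_nth)
    ultimately have "n \<le> p ! i" using i by (intro path_interior_spine[OF p]) auto
    then have "p ! i = n + j" using spine_eq_level[of "p ! i"] i(2) by simp
    then show ?thesis using on_p i(1) by (metis nth_mem)
  qed
qed

lemma spine_spanned:
  assumes "lo \<le> j" "j \<le> hi"
  shows "n + j \<in> spanned"
proof -
  have "lo \<in> level ` Y" "hi \<in> level ` Y" using finite_Y Y_ne unfolding lo_def hi_def by auto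
  then obtain a b where ab: "a \<in> Y" "b \<in> Y" "level a = lo" "level b = hi" by auto
  show ?thesis
  proof (cases "a = b")
    case False
    then show ?thesis using spine_spanned_pair[OF ab(1,2) False] ab assms by auto
  next
    case True
    have "\<not> card Y \<le> 1" using card_Y by simp
    then obtain c where c: "c \<in> Y" "c \<noteq> a"
      using card_le_Suc0_iff_eq[OF finite_Y] by auto
    have "level c = lo" using level_between[OF c(1)] ab True by simp
    then show ?thesis using spine_spanned_pair[OF ab(1) c(1) c(2)[symmetric]] ab True assms by auto
  qed
qed

lemma degree_spanned: "v \<in> spanned \<Longrightarrow> degree spanned_edges v = card {w \<in> spanned. adj v w}"
  unfolding spanned_edges_def by (rule degree_induced)

lemma Y_kept: "y \<in> Y \<Longrightarrow> y \<in> kept"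
proof -
  assume y: "y \<in> Y"
  then have "y < n" using Y_sub by auto
  moreover have "n + level y \<in> spanned" using spine_spanned level_between[OF y] by auto
  ultimately have "{w \<in> spanned. adj y w} = {n + level y}" using adj_leaf_iff by auto
  then show "y \<in> kept" using Y_sub_spanned y degree_spanned[of y] unfolding kept_def by auto
qed

lemma inner_spine_kept:
  assumes z: "z \<in> Y" "lo < level z" "level z < hi"
  shows "n + level z \<in> kept"
proof -
  let ?j = "level z"
  have zn: "z < n" using z Y_sub by auto
  have jn: "?j < n - 2" using z hi_le by simp
  have inS: "n + ?j \<in> spanned" using z by (intro spine_spanned) auto
  have fin: "finite {w. adj (n + ?j) w}" and c3: "card {w. adj (n + ?j) w} = 3"
    using degree_spine[OF jn] by (simp_all add: degree_edges card_ge_0_finite)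
  have "n + (?j - 1) \<in> spanned" using z by (intro spine_spanned) auto
  moreover have "n + (?j + 1) \<in> spanned" using z by (intro spine_spanned) auto
  moreover have "adj (n + ?j) (n + ?j - 1)" "adj (n + ?j) (n + ?j + 1)" "adj (n + ?j) z"
    using z jn zn hi_le unfolding adj_def by auto
  moreover have "n + (?j - 1) = n + ?j - 1" using z by simp
  ultimately have sub: "{n + ?j - 1, n + ?j + 1, z} \<subseteq> {w \<in> spanned. adj (n + ?j) w}"
    using Y_sub_spanned z by auto
  have "n + ?j - 1 \<noteq> n + ?j + 1" "n + ?j - 1 \<noteq> z" "n + ?j + 1 \<noteq> z" using zn z by auto
  then have "card {n + ?j - 1, n + ?j + 1, z} = 3" by simp
  moreover have "card {w \<in> spanned. adj (n + ?j) w} \<le> 3"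
    using card_mono[OF fin, of "{w \<in> spanned. adj (n + ?j) w}"] c3 by auto
  moreover have "finite {w \<in> spanned. adj (n + ?j) w}" using fin by simp
  ultimately have "card {w \<in> spanned. adj (n + ?j) w} = 3"
    using card_mono[OF _ sub] by (metis le_antisym)
  then show ?thesis unfolding kept_def using inS degree_spanned[OF inS] by simp
qed

lemma gap_spine_not_kept:
  assumes j: "lo < j" "j < hi" and no_leaf: "\<forall>y\<in>Y. level y \<noteq> j"
  shows "n + j \<notin> kept"
proof -
  have jn: "j < n - 2" using j hi_le by simp
  have inS: "n + j \<in> spanned" using j by (intro spine_spanned) auto
  have "{w \<in> spanned. adj (n + j) w} = {n + j - 1, n + j + 1}"
  proof
    show "{w \<in> spanned. adj (n + j) w} \<subseteq> {n + j - 1, n + j + 1}"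
      using spine_neighbours[OF jn] no_leaf leaf_spanned by auto
    have "n + (j - 1) \<in> spanned" using j by (intro spine_spanned) auto
    moreover have "n + (j + 1) \<in> spanned" using j by (intro spine_spanned) auto
    moreover have "adj (n + j) (n + j - 1)" "adj (n + j) (n + j + 1)"
      using j jn hi_le unfolding adj_def by auto
    moreover have "n + (j - 1) = n + j - 1" using j by simp
    ultimately show "{n + j - 1, n + j + 1} \<subseteq> {w \<in> spanned. adj (n + j) w}" by auto
  qed
  moreover have "card {n + j - 1, n + j + 1} = 2" using j by auto
  ultimately show ?thesis unfolding kept_def using inS degree_spanned[OF inS] by simp
qed

lemma kept_edgeD:
  assumes "{a, b} \<in> kept_edges"
  shows "\<exists>p. is_path spanned_edges a b p \<and> (\<forall>z\<in>set p. z \<noteq> a \<and> z \<noteq> b \<longrightarrow> z \<notin> kept)"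
proof -
  obtain u w p where uw: "{a, b} = {u, w}" "is_path spanned_edges u w p"
    "\<forall>z\<in>set p. z \<noteq> u \<and> z \<noteq> w \<longrightarrow> z \<notin> kept"
    using assms unfolding kept_edges_def by blast
  then consider "a = u" "b = w" | "a = w" "b = u" by (auto simp: doubleton_eq_iff)
  then show ?thesis
  proof cases
    case 2
    then show ?thesis using is_path_rev[OF uw(2)] uw(3) by auto
  qed (use uw in blast)
qed

lemma leaf_kept_edge:
  assumes y: "y \<in> Y" and r: "n + level y \<in> kept"
  shows "{y, n + level y} \<in> kept_edges"
proof -
  have yn: "y < n" using y Y_sub by auto
  have "{y, n + level y} \<in> edges" using adj_leaf_iff[OF yn] by (simp add: doubleton_in_edges_iff)
  moreover have "y \<in> spanned" "n + level y \<in> spanned" using Y_sub_spanned y r by (auto simp: kept_def)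
  ultimately have "is_path spanned_edges y (n + level y) [y, n + level y]"
    using yn unfolding is_path_def spanned_edges_def by (auto simp: less_Suc_eq)
  moreover have "y \<noteq> n + level y" using yn by simp
  ultimately show ?thesis unfolding kept_edges_def using Y_kept[OF y] r by fastforce
qed

lemma spine_kept_edge:
  assumes j: "lo \<le> j1" "j1 < j2" "j2 \<le> hi" and r: "n + j1 \<in> kept" "n + j2 \<in> kept"
    and gap: "\<forall>j. j1 < j \<and> j < j2 \<longrightarrow> n + j \<notin> kept"
  shows "{n + j1, n + j2} \<in> kept_edges"
proof -
  define p where "p = map (\<lambda>j. n + j) [j1..<Suc j2]"
  have len: "length p = Suc j2 - j1" unfolding p_def using j by simp
  have nth: "p ! i = n + j1 + i" if "i < length p" for i
    using that len by (simp add: p_def del: upt_Suc)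
  have "is_path spanned_edges (n + j1) (n + j2) p"
    unfolding is_path_def
  proof (intro conjI allI impI)
    show "p \<noteq> []" "last p = n + j2" using j by (simp_all add: p_def)
    show "hd p = n + j1" using j by (simp add: p_def upt_rec)
    show "distinct p" by (simp add: p_def distinct_map)
    fix i assume i: "Suc i < length p"
    have "adj (n + (j1 + i)) (n + (j1 + i) + 1)"
      using i j hi_le len by (intro adj_spine_spine) simp
    moreover have "n + (j1 + i) \<in> spanned" using i j len by (intro spine_spanned) auto
    moreover have "n + (j1 + i + 1) \<in> spanned" using i j len by (intro spine_spanned) auto
    ultimately show "{p ! i, p ! Suc i} \<in> spanned_edges"
      using nth[of i] nth[of "Suc i"] i unfolding spanned_edges_def
      by (simp add: doubleton_in_edges_iff add.assoc)
  qed
  moreover have "\<forall>z\<in>set p. z \<noteq> n + j1 \<and> z \<noteq> n + j2 \<longrightarrow> z \<notin> kept"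
    using gap by (auto simp: p_def)
  ultimately show ?thesis unfolding kept_edges_def using r j by fastforce
qed

lemma inner_leaf_kept_edge:
  assumes y: "y \<in> Y" "lo < level y" "level y < hi" and e: "{y, w} \<in> kept_edges"
  shows "w = n + level y"
proof (rule ccontr)
  assume ne: "w \<noteq> n + level y"
  have yn: "y < n" using y Y_sub by auto
  have "y \<noteq> w" using e unfolding kept_edges_def by (auto simp: doubleton_eq_iff)
  moreover obtain p where p: "is_path spanned_edges y w p" "\<forall>z\<in>set p. z \<noteq> y \<and> z \<noteq> w \<longrightarrow> z \<notin> kept"
    using kept_edgeD[OF e] by blast
  moreover have pE: "is_path edges y w p" using is_path_mono[OF p(1) spanned_edges_sub] .
  ultimately have "1 < length p \<and> p ! 1 = n + level y" using path_from_leaf yn by blast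
  then have "n + level y \<in> set p" by (metis nth_mem)
  then have "n + level y \<notin> kept" using p(2) ne yn by auto
  then show False using inner_spine_kept[OF y] by simp
qed

lemma kept_spine_edge_no_leaf_between:
  assumes j: "lo \<le> j1" "j1 < j2" "j2 \<le> hi" and e: "{n + j1, n + j2} \<in> kept_edges"
    and z: "z \<in> Y" "j1 < level z" "level z < j2"
  shows False
proof -
  obtain p where p: "is_path spanned_edges (n + j1) (n + j2) p"
    "\<forall>x\<in>set p. x \<noteq> n + j1 \<and> x \<noteq> n + j2 \<longrightarrow> x \<notin> kept"
    using kept_edgeD[OF e] by blast
  have pE: "is_path edges (n + j1) (n + j2) p" using is_path_mono[OF p(1) spanned_edges_sub] .
  have ne: "p \<noteq> []" "hd p = n + j1" "last p = n + j2" using pE by (auto simp: is_path_def)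
  obtain i where i: "i < length p" "level (p ! i) = level z"
    using path_level_ivt[OF pE, of "level z"] z by auto
  have "i \<noteq> 0" using i z ne level_spine by (metis hd_conv_nth less_irrefl)
  moreover have "i \<noteq> length p - 1" using i z ne level_spine by (metis last_conv_nth less_irrefl)
  ultimately have "n \<le> p ! i" using i by (intro path_interior_spine[OF pE]) auto
  then have pi: "p ! i = n + level z" using spine_eq_level i(2) by metis
  have "p ! i \<notin> kept" using p(2) i z pi nth_mem by (metis add_left_cancel less_irrefl)
  moreover have "n + level z \<in> kept" using inner_spine_kept z j by simp
  ultimately show False using pi by simp
qed

definition inner :: "nat set" where "inner = {y \<in> Y. lo < level y \<and> level y < hi}"

lemma inner_sub: "inner \<subseteq> Y"
  by (auto simp: inner_def)

lemma perm_inner: "y \<in> inner \<Longrightarrow> \<pi> y = level y + 1"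
proof -
  assume y: "y \<in> inner"
  then have yn: "y < n" and k: "lo < level y" "level y < hi" using Y_sub by (auto simp: inner_def)
  have "level y < n - 3" "0 < level y" using k hi_le by simp_all
  then show ?thesis using yn perm_less[OF yn] unfolding level_def attach_def
    by (auto split: if_splits)
qed

lemma inner_level_inj: "y1 \<in> inner \<Longrightarrow> y2 \<in> inner \<Longrightarrow> level y1 = level y2 \<Longrightarrow> y1 = y2"
  using perm_inner perm_inj Y_sub inner_sub by (metis lessThan_iff subset_iff)

lemma card_not_inner: "card (Y - inner) \<le> 4"
proof -
  have "Y - inner \<subseteq> {x. x < n \<and> level x = lo} \<union> {x. x < n \<and> level x = hi}"
    using Y_sub level_between by (force simp: inner_def)
  then have "card (Y - inner) \<le> card ({x. x < n \<and> level x = lo} \<union> {x. x < n \<and> level x = hi})"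
    by (intro card_mono) auto
  also have "\<dots> \<le> card {x. x < n \<and> level x = lo} + card {x. x < n \<and> level x = hi}"
    by (rule card_Un_le)
  also have "\<dots> \<le> 4" using card_level_fiber_le[of lo] card_level_fiber_le[of hi] by simp
  finally show ?thesis .
qed

definition next_leaf :: "nat \<Rightarrow> nat" where
  "next_leaf y = (SOME z. z \<in> Y \<and> level z = Min {v \<in> level ` Y. level y < v})"

lemma next_leaf_spec:
  assumes y: "y \<in> inner"
  shows "next_leaf y \<in> Y \<and> level y < level (next_leaf y) \<and>
    (\<forall>z\<in>Y. level y < level z \<longrightarrow> level (next_leaf y) \<le> level z)"
proof -
  let ?V = "{v \<in> level ` Y. level y < v}"
  have "hi \<in> level ` Y" "level y < hi" using finite_Y Y_ne y by (simp_all add: hi_def inner_def)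
  then have ne: "?V \<noteq> {}" by auto
  have fin: "finite ?V" using finite_Y by simp
  have "Min ?V \<in> ?V" using Min_in[OF fin ne] .
  then have "\<exists>z. z \<in> Y \<and> level z = Min ?V" by auto
  then have "next_leaf y \<in> Y \<and> level (next_leaf y) = Min ?V"
    unfolding next_leaf_def by (rule someI_ex)
  moreover have "\<forall>z\<in>Y. level y < level z \<longrightarrow> Min ?V \<le> level z" using fin by (auto intro: Min_le)
  ultimately show ?thesis using \<open>Min ?V \<in> ?V\<close> by simp
qed

lemma next_leaf_inj: "y1 \<in> inner \<Longrightarrow> y2 \<in> inner \<Longrightarrow> next_leaf y1 = next_leaf y2 \<Longrightarrow> y1 = y2"
  using next_leaf_spec inner_level_inj inner_sub
  by (metis linorder_neqE_nat not_le subsetD)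

lemma next_leaf_kept_edge:
  assumes y: "y \<in> inner" "next_leaf y \<in> inner"
  shows "{n + level y, n + level (next_leaf y)} \<in> kept_edges"
proof (rule spine_kept_edge)
  have yY: "y \<in> Y" "next_leaf y \<in> Y" using y inner_sub by auto
  show "lo \<le> level y" "level (next_leaf y) \<le> hi" using level_between yY by auto
  show lt: "level y < level (next_leaf y)" using next_leaf_spec[OF y(1)] by simp
  show "n + level y \<in> kept" "n + level (next_leaf y) \<in> kept"
    using inner_spine_kept y inner_sub by (auto simp: inner_def)
  show "\<forall>j. level y < j \<and> j < level (next_leaf y) \<longrightarrow> n + j \<notin> kept"
  proof (intro allI impI gap_spine_not_kept)
    fix j assume j: "level y < j \<and> j < level (next_leaf y)"
    then show "lo < j" "j < hi" using level_between yY by (meson le_less_trans less_le_trans)+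
    show "\<forall>z\<in>Y. level z \<noteq> j" using j next_leaf_spec[OF y(1)] by (metis not_le)
  qed
qed

lemma absdiff_perm_le:
  assumes "y \<in> Y" "y' \<in> Y"
  shows "absdiff (\<pi> y) (\<pi> y') \<le> (hi - lo) + 2"
proof -
  have "level y = attach (\<pi> y)" "level y' = attach (\<pi> y')"
    using assms Y_sub by (auto simp: level_def)
  then show ?thesis
    using attach_bounds[of "\<pi> y"] attach_bounds[of "\<pi> y'"] level_between[OF assms(1)]
      level_between[OF assms(2)]
    unfolding absdiff_def by linarith
qed

end

locale caterpillar_pair =
  C1: caterpillar_component n \<pi>\<^sub>1 Y + C2: caterpillar_component n \<pi>\<^sub>2 Y for n \<pi>\<^sub>1 \<pi>\<^sub>2 Y +
  fixes m :: nat
  assumes grid: "\<And>x x'. x < n \<Longrightarrow> x' < n \<Longrightarrow> x \<noteq> x' \<Longrightarrow>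
      m - 1 \<le> absdiff (\<pi>\<^sub>1 x) (\<pi>\<^sub>1 x') + absdiff (\<pi>\<^sub>2 x) (\<pi>\<^sub>2 x')"
    and iso: "iso_fixing Y (restrict_tree (caterpillar.tree n \<pi>\<^sub>1) Y)
      (restrict_tree (caterpillar.tree n \<pi>\<^sub>2) Y)"
begin

definition linked :: "nat set" where
  "linked = {y \<in> C1.inner \<inter> C2.inner. C1.next_leaf y \<in> C1.inner \<inter> C2.inner}"

definition link_min :: "nat \<Rightarrow> nat" where
  "link_min y = min (C2.level y) (C2.level (C1.next_leaf y))"

definition link_max :: "nat \<Rightarrow> nat" where
  "link_max y = max (C2.level y) (C2.level (C1.next_leaf y))"

lemma linkedD:
  assumes "y \<in> linked"
  shows "y \<in> C1.inner" "y \<in> C2.inner" "C1.next_leaf y \<in> C1.inner" "C1.next_leaf y \<in> C2.inner"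
    "y \<in> Y" "C1.next_leaf y \<in> Y"
  using assms C1.inner_sub by (auto simp: linked_def)

lemma finite_linked: "finite linked"
  using C1.finite_Y by (rule rev_finite_subset) (auto dest: linkedD)

lemma kept_iso:
  obtains f where "\<forall>y\<in>Y. f y = y"
    "\<forall>u\<in>C1.kept. \<forall>w\<in>C1.kept. {u, w} \<in> C1.kept_edges \<longleftrightarrow> {f u, f w} \<in> C2.kept_edges"
  using iso unfolding iso_fixing_def C1.restrict_tree_eq C2.restrict_tree_eq by auto

text \<open>The isomorphism fixes each inner leaf, hence maps its unique neighbour, its spine vertex,
  to the spine vertex of the same leaf in the second tree.\<close>

lemma linked_kept_edge:
  assumes y: "y \<in> linked"
  shows "{n + C2.level y, n + C2.level (C1.next_leaf y)} \<in> C2.kept_edges"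
proof -
  obtain f where f: "\<forall>y\<in>Y. f y = y"
    "\<forall>u\<in>C1.kept. \<forall>w\<in>C1.kept. {u, w} \<in> C1.kept_edges \<longleftrightarrow> {f u, f w} \<in> C2.kept_edges"
    by (rule kept_iso)
  have spine_image: "f (n + C1.level z) = n + C2.level z" if "z \<in> C1.inner" "z \<in> C2.inner" for z
  proof -
    have zY: "z \<in> Y" using that C1.inner_sub by auto
    have r: "n + C1.level z \<in> C1.kept" using C1.inner_spine_kept that(1) by (simp add: C1.inner_def)
    have "{f z, f (n + C1.level z)} \<in> C2.kept_edges"
      using C1.leaf_kept_edge[OF zY r] f(2) r C1.Y_kept[OF zY] by blast
    then show ?thesis using f(1) zY C2.inner_leaf_kept_edge that(2) by (simp add: C2.inner_def)
  qed
  have "{n + C1.level y, n + C1.level (C1.next_leaf y)} \<in> C1.kept_edges"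
    using C1.next_leaf_kept_edge linkedD[OF y] by blast
  moreover have "n + C1.level y \<in> C1.kept" "n + C1.level (C1.next_leaf y) \<in> C1.kept"
    using C1.inner_spine_kept linkedD[OF y] by (auto simp: C1.inner_def)
  ultimately show ?thesis using f(2) spine_image linkedD[OF y] by metis
qed

lemma linked_no_leaf_between:
  assumes y: "y \<in> linked" and z: "z \<in> Y"
  shows "\<not> (link_min y < C2.level z \<and> C2.level z < link_max y)"
proof
  assume between: "link_min y < C2.level z \<and> C2.level z < link_max y"
  have "C2.level y \<noteq> C2.level (C1.next_leaf y)"
    using C1.next_leaf_spec C2.inner_level_inj linkedD[OF y] by (metis less_irrefl)
  then have lt: "link_min y < link_max y" by (simp add: link_min_def link_max_def)
  have edge: "{n + link_min y, n + link_max y} \<in> C2.kept_edges"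
    using linked_kept_edge[OF y] by (auto simp: link_min_def link_max_def min_def max_def insert_commute)
  have "C2.lo \<le> link_min y" "link_max y \<le> C2.hi"
    using C2.level_between linkedD[OF y] by (auto simp: link_min_def link_max_def)
  then show False
    using C2.kept_spine_edge_no_leaf_between[OF _ lt _ edge z] between by blast
qed

lemma card_Y_le_linked: "card Y \<le> card linked + 16"
proof -
  define G where "G = C1.inner \<inter> C2.inner"
  define B where "B = {y \<in> G. C1.next_leaf y \<notin> G}"
  have "Y - G = (Y - C1.inner) \<union> (Y - C2.inner)" by (auto simp: G_def)
  then have "card (Y - G) \<le> 8"
    using card_Un_le[of "Y - C1.inner" "Y - C2.inner"] C1.card_not_inner C2.card_not_inner by simp
  moreover have "card Y = card G + card (Y - G)"
    using C1.inner_sub C1.finite_Y by (metis G_def card_Diff_subset card_mono le_add_diff_inverse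
        finite_subset inf.coboundedI1)
  moreover have "card G = card linked + card B"
  proof -
    have "G = linked \<union> B" "linked \<inter> B = {}" by (auto simp: linked_def B_def G_def)
    moreover have "finite G" using C1.finite_Y C1.inner_sub by (auto simp: G_def intro: finite_subset)
    ultimately show ?thesis by (simp add: card_Un_disjoint)
  qed
  moreover have "card B \<le> card (Y - G)"
  proof (rule card_inj_on_le)
    show "inj_on C1.next_leaf B" using C1.next_leaf_inj by (auto simp: inj_on_def B_def G_def)
    show "C1.next_leaf ` B \<subseteq> Y - G" using C1.next_leaf_spec by (auto simp: B_def G_def)
  qed (use C1.finite_Y in simp)
  ultimately show ?thesis by linarith
qed

lemma linked_grid:
  assumes y: "y \<in> linked"
  shows "m - 1 \<le> (C1.level (C1.next_leaf y) - C1.level y) + (link_max y - link_min y)"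
proof -
  let ?y' = "C1.next_leaf y"
  have lt: "C1.level y < C1.level ?y'" using C1.next_leaf_spec linkedD[OF y] by blast
  then have "y \<noteq> ?y'" by auto
  moreover have "y < n" "?y' < n" using linkedD[OF y] C1.Y_sub by auto
  ultimately have "m - 1 \<le> absdiff (\<pi>\<^sub>1 y) (\<pi>\<^sub>1 ?y') + absdiff (\<pi>\<^sub>2 y) (\<pi>\<^sub>2 ?y')"
    using grid by blast
  moreover have "absdiff (\<pi>\<^sub>1 y) (\<pi>\<^sub>1 ?y') = C1.level ?y' - C1.level y"
    using C1.perm_inner linkedD[OF y] lt by (simp add: absdiff_def)
  moreover have "absdiff (\<pi>\<^sub>2 y) (\<pi>\<^sub>2 ?y') = link_max y - link_min y"
    using C2.perm_inner linkedD[OF y] by (simp add: absdiff_def link_min_def link_max_def)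
  ultimately show ?thesis by simp
qed

lemma sum_linked_gaps1_le:
  "(\<Sum>y\<in>linked. C1.level (C1.next_leaf y) - C1.level y) \<le> C1.hi - C1.lo"
proof (rule sum_disjoint_interval_lengths_le[OF finite_linked])
  fix y assume "y \<in> linked"
  then show "C1.lo \<le> C1.level y \<and> C1.level y \<le> C1.level (C1.next_leaf y) \<and>
      C1.level (C1.next_leaf y) \<le> C1.hi"
    using linkedD C1.level_between C1.next_leaf_spec by (meson less_imp_le)
next
  fix y1 y2 assume y: "y1 \<in> linked" "y2 \<in> linked" "y1 \<noteq> y2"
  then have "C1.level y1 \<noteq> C1.level y2" using C1.inner_level_inj linkedD by blast
  then consider "C1.level y1 < C1.level y2" | "C1.level y2 < C1.level y1" by linarith
  then show "{C1.level y1..<C1.level (C1.next_leaf y1)} \<inter> {C1.level y2..<C1.level (C1.next_leaf y2)} = {}"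
  proof cases
    case 1
    then have "C1.level (C1.next_leaf y1) \<le> C1.level y2" using C1.next_leaf_spec linkedD y by blast
    then show ?thesis by auto
  next
    case 2
    then have "C1.level (C1.next_leaf y2) \<le> C1.level y1" using C1.next_leaf_spec linkedD y by blast
    then show ?thesis by auto
  qed
qed

text \<open>Two overlapping intervals of the second spine containing no leaf level strictly inside
  have the same ends; by injectivity of the levels of inner leaves they would come from the
  same link, or from a link and its reverse, which the order on the first spine excludes.\<close>

lemma sum_linked_gaps2_le: "(\<Sum>y\<in>linked. link_max y - link_min y) \<le> C2.hi - C2.lo"
proof (rule sum_disjoint_interval_lengths_le[OF finite_linked])
  fix y assume "y \<in> linked"
  then show "C2.lo \<le> link_min y \<and> link_min y \<le> link_max y \<and> link_max y \<le> C2.hi"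
    using linkedD C2.level_between by (simp add: link_min_def link_max_def)
next
  fix y1 y2 assume y: "y1 \<in> linked" "y2 \<in> linked" "y1 \<noteq> y2"
  let ?K = "C2.level ` Y"
  have ends: "link_min y \<in> ?K" "link_max y \<in> ?K" if "y \<in> linked" for y
    using linkedD[OF that] by (auto simp: link_min_def link_max_def min_def max_def)
  have free: "\<forall>k\<in>?K. \<not> (link_min y < k \<and> k < link_max y)" if "y \<in> linked" for y
    using linked_no_leaf_between[OF that] by blast
  show "{link_min y1..<link_max y1} \<inter> {link_min y2..<link_max y2} = {}"
  proof (rule ccontr)
    assume "{link_min y1..<link_max y1} \<inter> {link_min y2..<link_max y2} \<noteq> {}"
    then have "link_min y1 = link_min y2 \<and> link_max y1 = link_max y2"
      using overlapping_gap_intervals_eq ends free y by metis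
    then have "{C2.level y1, C2.level (C1.next_leaf y1)} = {C2.level y2, C2.level (C1.next_leaf y2)}"
      by (auto simp: link_min_def link_max_def min_def max_def split: if_splits)
    then consider "C2.level y1 = C2.level y2"
      | "C2.level y1 = C2.level (C1.next_leaf y2)" "C2.level (C1.next_leaf y1) = C2.level y2"
      by (auto simp: doubleton_eq_iff)
    then show False
    proof cases
      case 1
      then show False using C2.inner_level_inj linkedD y by blast
    next
      case 2
      then have "y1 = C1.next_leaf y2" "C1.next_leaf y1 = y2"
        using C2.inner_level_inj linkedD y by blast+
      then show False using C1.next_leaf_spec linkedD y by (metis less_asym)
    qed
  qed
qed

lemma card_linked_le: "card linked * (m - 1) \<le> (C1.hi - C1.lo) + (C2.hi - C2.lo)"
proof -
  have "card linked * (m - 1) = (\<Sum>y\<in>linked. m - 1)" by simp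
  also have "\<dots> \<le> (\<Sum>y\<in>linked. (C1.level (C1.next_leaf y) - C1.level y) + (link_max y - link_min y))"
    by (rule sum_mono) (rule linked_grid)
  also have "\<dots> = (\<Sum>y\<in>linked. C1.level (C1.next_leaf y) - C1.level y) +
      (\<Sum>y\<in>linked. link_max y - link_min y)"
    by (rule sum.distrib)
  finally show ?thesis using sum_linked_gaps1_le sum_linked_gaps2_le by linarith
qed

lemma spreads_ge: "m - 5 \<le> (C1.hi - C1.lo) + (C2.hi - C2.lo)"
proof -
  have "\<not> card Y \<le> 1" using C1.card_Y by simp
  then obtain y y' where y: "y \<in> Y" "y' \<in> Y" "y \<noteq> y'"
    using card_le_Suc0_iff_eq[OF C1.finite_Y] by auto
  then have "m - 1 \<le> absdiff (\<pi>\<^sub>1 y) (\<pi>\<^sub>1 y') + absdiff (\<pi>\<^sub>2 y) (\<pi>\<^sub>2 y')"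
    using grid C1.Y_sub by blast
  then show ?thesis using C1.absdiff_perm_le[OF y(1,2)] C2.absdiff_perm_le[OF y(1,2)] by linarith
qed

lemma component_bound: "(card Y - 1) * (m - 5) \<le> 16 * ((C1.hi - C1.lo) + (C2.hi - C2.lo))"
proof -
  define L where "L = (C1.hi - C1.lo) + (C2.hi - C2.lo)"
  have "card Y - 16 \<le> card linked" using card_Y_le_linked by linarith
  then have "(card Y - 16) * (m - 1) \<le> card linked * (m - 1)" by (rule mult_right_mono) simp
  then have a: "(card Y - 16) * (m - 1) \<le> L" using card_linked_le unfolding L_def by linarith
  have b: "m - 5 \<le> L" using spreads_ge by (simp add: L_def)
  have "(card Y - 1) * (m - 5) \<le> ((card Y - 16) + 15) * (m - 5)" by (rule mult_right_mono) auto
  also have "\<dots> = (card Y - 16) * (m - 5) + 15 * (m - 5)" by (simp add: algebra_simps)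
  also have "\<dots> \<le> (card Y - 16) * (m - 1) + 15 * L"
    using b by (intro add_mono mult_left_mono) auto
  also have "\<dots> \<le> 16 * L" using a by simp
  finally show ?thesis by (simp add: L_def)
qed

end

text \<open>Leaf \<open>x = a m + b\<close> sits in row \<open>a\<close> and column \<open>b\<close> of the \<open>m \<times> m\<close> grid; the transposed
  order reads the grid column by column.\<close>

definition grid_transpose :: "nat \<Rightarrow> nat \<Rightarrow> nat" where
  "grid_transpose m x = (x mod m) * m + x div m"

lemma grid_transpose_less: "0 < m \<Longrightarrow> x < m * m \<Longrightarrow> grid_transpose m x < m * m"
proof -
  assume m: "0 < m" and x: "x < m * m"
  have "x div m < m" using x m by (simp add: div_less_iff_less_mult)
  moreover have "x mod m \<le> m - 1" using m by (metis Suc_pred' le_simps(2) mod_less_divisor)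
  ultimately have "(x mod m) * m + x div m < (m - 1) * m + m"
    by (metis add_le_less_mono mult_le_mono1)
  also have "\<dots> = m * m" using m by (cases m) auto
  finally show ?thesis by (simp add: grid_transpose_def)
qed

lemma grid_transpose_involution:
  assumes m: "0 < m" and x: "x < m * m"
  shows "grid_transpose m (grid_transpose m x) = x"
proof -
  have d: "x div m < m" using x m by (simp add: div_less_iff_less_mult)
  have "grid_transpose m x mod m = x div m" "grid_transpose m x div m = x mod m"
    using d m by (simp_all add: grid_transpose_def)
  then show ?thesis by (simp add: grid_transpose_def mult.commute)
qed

lemma bij_grid_transpose: "0 < m \<Longrightarrow> bij_betw (grid_transpose m) {..<m * m} {..<m * m}"
  by (rule bij_betw_byWitness[where f' = "grid_transpose m"])
    (auto simp: grid_transpose_involution grid_transpose_less)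

text \<open>Leaves less than \<open>m\<close> apart lie in the same or in adjacent rows.\<close>

lemma grid_transpose_close:
  assumes m: "0 < m" and xx: "x < x'" "x' < x + m"
  shows "m - 1 \<le> absdiff (grid_transpose m x) (grid_transpose m x')"
proof -
  define a b a' b' where "a = x div m" "b = x mod m" "a' = x' div m" "b' = x' mod m"
  have x: "x = a * m + b" "x' = a' * m + b'" "b < m" "b' < m" using m by (simp_all add: a_b_a'_b'_def)
  have "a \<le> a'" using xx by (simp add: a_b_a'_b'_def div_le_mono)
  have "a' * m < (a + 2) * m" using x xx by (simp add: algebra_simps)
  then have "a' < a + 2" by (metis mult_less_cancel2)
  have t: "grid_transpose m x = b * m + a" "grid_transpose m x' = b' * m + a'"
    by (simp_all add: grid_transpose_def a_b_a'_b'_def)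
  show ?thesis
  proof (cases "a' = a")
    case True
    then have "b < b'" using x xx by simp
    then have "(b + 1) * m \<le> b' * m" by (intro mult_right_mono) auto
    then show ?thesis using t True by (simp add: absdiff_def algebra_simps)
  next
    case False
    then have a': "a' = a + 1" using \<open>a \<le> a'\<close> \<open>a' < a + 2\<close> by simp
    then have "b' < b" using x xx by (simp add: algebra_simps)
    then have "(b' + 1) * m \<le> b * m" by (intro mult_right_mono) auto
    then show ?thesis using t a' by (simp add: absdiff_def algebra_simps)
  qed
qed

lemma grid_separates:
  assumes "0 < m" "x \<noteq> x'"
  shows "m - 1 \<le> absdiff (id x) (id x') + absdiff (grid_transpose m x) (grid_transpose m x')"
proof -
  have "m - 1 \<le> absdiff u u' + absdiff (grid_transpose m u) (grid_transpose m u')"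
    if "u < u'" for u u'
  proof (cases "u' < u + m")
    case True then show ?thesis using grid_transpose_close[OF assms(1) that True] by simp
  next
    case False then show ?thesis by (simp add: absdiff_def)
  qed
  then show ?thesis using assms(2) absdiff_commute by (metis id_apply linorder_neqE_nat)
qed

definition spread :: "nat \<Rightarrow> (nat \<Rightarrow> nat) \<Rightarrow> nat set \<Rightarrow> nat" where
  "spread n \<pi> Y =
    (if 2 \<le> card Y then caterpillar_component.hi n \<pi> Y - caterpillar_component.lo n \<pi> Y else 0)"

text \<open>The spine segments \<open>[lo, hi]\<close> of the components lie in their spanned subtrees, which
  are pairwise disjoint, and the spine has \<open>n - 2\<close> vertices.\<close>

lemma (in caterpillar) sum_spread_le:
  assumes "finite F" "\<forall>Y\<in>F. Y \<subseteq> {..<n}"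
    and disj: "\<forall>Y\<in>F. \<forall>Y'\<in>F. Y \<noteq> Y' \<longrightarrow> span_vertices tree Y \<inter> span_vertices tree Y' = {}"
  shows "(\<Sum>Y\<in>F. spread n \<pi> Y) \<le> n"
proof -
  define J where
    "J Y = (if 2 \<le> card Y
      then {n + caterpillar_component.lo n \<pi> Y .. n + caterpillar_component.hi n \<pi> Y} else {})"
    for Y
  have J: "J Y \<subseteq> span_vertices tree Y \<and> J Y \<subseteq> {n..<n + (n - 2)} \<and> spread n \<pi> Y \<le> card (J Y)"
    if "Y \<in> F" for Y
  proof (cases "2 \<le> card Y")
    case True
    interpret caterpillar_component n \<pi> Y using that assms(2) True by unfold_locales auto
    have "J Y \<subseteq> span_vertices tree Y"
    proof
      fix v assume "v \<in> J Y"
      then have "lo \<le> v - n" "v - n \<le> hi" "v = n + (v - n)" using True by (auto simp: J_def)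
      then show "v \<in> span_vertices tree Y" using spine_spanned spanned_def by metis
    qed
    moreover have "J Y \<subseteq> {n..<n + (n - 2)}" using hi_le n_ge_4 True by (auto simp: J_def)
    moreover have "spread n \<pi> Y \<le> card (J Y)" using True by (simp add: J_def spread_def)
    ultimately show ?thesis by blast
  qed (simp add: J_def spread_def)
  have "(\<Sum>Y\<in>F. spread n \<pi> Y) \<le> (\<Sum>Y\<in>F. card (J Y))"
    using J by (intro sum_mono) blast
  also have "\<dots> = card (\<Union>Y\<in>F. J Y)"
  proof (intro card_UN_disjoint[symmetric] assms(1) ballI impI)
    show "finite (J Y)" for Y by (simp add: J_def)
    show "J Y \<inter> J Y' = {}" if "Y \<in> F" "Y' \<in> F" "Y \<noteq> Y'" for Y Y'
      using J[OF that(1)] J[OF that(2)] disj that by blast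
  qed
  also have "\<dots> \<le> card {n..<n + (n - 2)}" using J by (intro card_mono) auto
  finally show ?thesis by simp
qed

abbreviation grid_caterpillar :: "nat \<Rightarrow> (nat \<Rightarrow> nat) \<Rightarrow> nat graph" where
  "grid_caterpillar m \<equiv> caterpillar.tree (m * m)"

lemma caterpillar_grid:
  assumes "10 \<le> m"
  shows "caterpillar (m * m) id" "caterpillar (m * m) (grid_transpose m)"
proof -
  have "4 \<le> m * m" using mult_le_mono[OF assms assms] by simp
  then show "caterpillar (m * m) id" "caterpillar (m * m) (grid_transpose m)"
    using bij_grid_transpose[of m] assms by (simp_all add: caterpillar_def)
qed

lemma grid_component_bound:
  assumes m: "10 \<le> m" and Y: "Y \<subseteq> {..<m * m}"
    and iso: "iso_fixing Y (restrict_tree (grid_caterpillar m id) Y)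
      (restrict_tree (grid_caterpillar m (grid_transpose m)) Y)"
  shows "(card Y - 1) * (m - 5) \<le> 16 * (spread (m * m) id Y + spread (m * m) (grid_transpose m) Y)"
proof (cases "2 \<le> card Y")
  case True
  have "\<forall>x x'. x \<noteq> x' \<longrightarrow>
      m - 1 \<le> absdiff (id x) (id x') + absdiff (grid_transpose m x) (grid_transpose m x')"
    using grid_separates m by simp
  then have "caterpillar_pair (m * m) id (grid_transpose m) Y m"
    unfolding caterpillar_pair_def caterpillar_pair_axioms_def caterpillar_component_def
      caterpillar_component_axioms_def
    using caterpillar_grid[OF m] Y True iso by blast
  then interpret caterpillar_pair "m * m" id "grid_transpose m" Y m .
  show ?thesis using component_bound True by (simp add: spread_def)
qed simp

lemma grid_forest_card_ge:
  assumes m: "10 \<le> m"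
    and af: "agreement_forest {..<m * m} (grid_caterpillar m id) (grid_caterpillar m (grid_transpose m)) F"
  shows "real (m * m) - 64 * real m \<le> real (card F)"
proof -
  define n where "n = m * m"
  interpret A: caterpillar n id using caterpillar_grid[OF m] by (simp add: n_def)
  interpret B: caterpillar n "grid_transpose m" using caterpillar_grid[OF m] by (simp add: n_def)
  have pa: "partition_on {..<n} F" using af by (simp add: agreement_forest_def n_def)
  then have finF: "finite F" and sub: "\<forall>Y\<in>F. Y \<subseteq> {..<n}"
    by (auto simp: partition_on_def intro: finite_elements)
  have "n - card F = (\<Sum>Y\<in>F. card Y - 1)"
    using sum_card_minus_one_partition[OF pa] by simp
  then have "(n - card F) * (m - 5) = (\<Sum>Y\<in>F. (card Y - 1) * (m - 5))"
    by (simp add: sum_distrib_right)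
  also have "\<dots> \<le> (\<Sum>Y\<in>F. 16 * (spread n id Y + spread n (grid_transpose m) Y))"
    using grid_component_bound[OF m] sub af
    by (intro sum_mono) (auto simp: agreement_forest_def n_def)
  also have "\<dots> = 16 * ((\<Sum>Y\<in>F. spread n id Y) + (\<Sum>Y\<in>F. spread n (grid_transpose m) Y))"
    by (simp add: sum_distrib_left sum.distrib)
  also have "\<dots> \<le> 16 * (n + n)"
    using A.sum_spread_le[OF finF sub] B.sum_spread_le[OF finF sub] af
    by (intro mult_left_mono add_mono) (auto simp: agreement_forest_def n_def)
  also have "\<dots> \<le> (64 * m) * (m - 5)"
  proof -
    obtain k where "m = k + 10" using m by (metis add.commute le_Suc_ex)
    then show ?thesis by (simp add: n_def algebra_simps)
  qed
  finally have "n - card F \<le> 64 * m" using m by simp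
  then show ?thesis unfolding n_def by linarith
qed

theorem lemma8:
  shows "\<exists>(P :: (nat set \<times> nat graph \<times> nat graph) set) (g :: nat \<Rightarrow> real).
     infinite {card X | X T1 T2. (X, T1, T2) \<in> P} \<and>
     (\<lambda>n. g n / real n) \<longlonglongrightarrow> 0 \<and>
     (\<forall>(X, T1, T2) \<in> P. finite X \<and> phylo_tree X T1 \<and> phylo_tree X T2 \<and>
        (\<forall>F. agreement_forest X T1 T2 F \<longrightarrow>
             real (card F) \<ge> real (card X) - g (card X)))"
proof (intro exI conjI)
  define P :: "(nat set \<times> nat graph \<times> nat graph) set" where
    "P = {({..<m * m}, grid_caterpillar m id, grid_caterpillar m (grid_transpose m)) | m. 10 \<le> m}"
  define g :: "nat \<Rightarrow> real" where "g n = 64 * sqrt (real n)" for n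
  have "m * m \<in> {card X | X T1 T2. (X, T1, T2) \<in> P}" if "10 \<le> m" for m
  proof -
    have "({..<m * m}, grid_caterpillar m id, grid_caterpillar m (grid_transpose m)) \<in> P"
      using that by (auto simp: P_def)
    then show ?thesis unfolding mem_Collect_eq by (metis card_lessThan)
  qed
  moreover have "k < (k + 10) * (k + 10)" for k :: nat
    using le_square[of "k + 10"] by linarith
  ultimately show "infinite {card X | X T1 T2. (X, T1, T2) \<in> P}"
    unfolding infinite_nat_iff_unbounded by (meson le_add2)
  show "(\<lambda>n. g n / real n) \<longlonglongrightarrow> 0" unfolding g_def by real_asymp
  have "g (m * m) = 64 * real m" for m by (simp add: g_def real_sqrt_mult)
  then show "\<forall>(X, T1, T2) \<in> P. finite X \<and> phylo_tree X T1 \<and> phylo_tree X T2 \<and>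
      (\<forall>F. agreement_forest X T1 T2 F \<longrightarrow> real (card F) \<ge> real (card X) - g (card X))"
    using caterpillar.phylo_tree_caterpillar[OF caterpillar_grid(1)]
      caterpillar.phylo_tree_caterpillar[OF caterpillar_grid(2)] grid_forest_card_ge
    by (clarsimp simp: P_def)
qed

end
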